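(* Let $M$ be a binary matroid. Then $P(M)$ has no nontrivial hyperplane split.
   Context: A matroid is binary if it is representable over $\mathbb{F}_2$. For a matroid $N$ on $E=\{1,\dots,n\}$, $P(N)=\mathrm{conv}\{\sum_{i\in B}e_i : B \text{ a base of } N\}\subset\mathbb{R}^n$. A hyperplane split of $P(N)$ is an expression $P(N)=P(N_1)\cup P(N_2)$ with $N_1,N_2$ matroids on $E$ such that $P(N_1)\cap P(N_2)$ is a face of both $P(N_1)$ and $P(N_2)$; it is nontrivial if $P(N_1)\neq P(N)$ and $P(N_2)\neq P(N)$. *)

theory Defs
  imports "HOL-Analysis.Analysis" "HOL-Library.Z2"
begin

text \<open>A matroid on the finite ground set UNIV of the finite type 'n, given by its set of bases
  (base axioms: nonempty, basis exchange).\<close>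
definition matroid_bases :: "'n::finite set set \<Rightarrow> bool" where
  "matroid_bases \<B> \<longleftrightarrow> \<B> \<noteq> {} \<and>
     (\<forall>B1\<in>\<B>. \<forall>B2\<in>\<B>. \<forall>x\<in>B1 - B2. \<exists>y\<in>B2 - B1. insert y (B1 - {x}) \<in> \<B>)"

text \<open>Linear independence over GF(2) of the columns indexed by S of a matrix A
  (column e is the vector i \<mapsto> A e i).\<close>
definition gf2_indep :: "('n \<Rightarrow> nat \<Rightarrow> bit) \<Rightarrow> 'n set \<Rightarrow> bool" where
  "gf2_indep A S \<longleftrightarrow>
     (\<forall>c :: 'n \<Rightarrow> bit. (\<forall>i. (\<Sum>e\<in>S. c e * A e i) = 0) \<longrightarrow> (\<forall>e\<in>S. c e = 0))"

definition binary_matroid :: "'n::finite set set \<Rightarrow> bool" where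
  "binary_matroid \<B> \<longleftrightarrow> (\<exists>A :: 'n \<Rightarrow> nat \<Rightarrow> bit.
     \<B> = {S. gf2_indep A S \<and> (\<forall>e. gf2_indep A (insert e S) \<longrightarrow> e \<in> S)})"

definition base_polytope :: "'n::finite set set \<Rightarrow> (real ^ 'n) set" where
  "base_polytope \<B> = convex hull ((\<lambda>B. \<chi> i. if i \<in> B then 1 else 0) ` \<B>)"

definition hyperplane_split :: "'n::finite set set \<Rightarrow> 'n set set \<Rightarrow> 'n set set \<Rightarrow> bool" where
  "hyperplane_split \<B> \<B>1 \<B>2 \<longleftrightarrow> matroid_bases \<B>1 \<and> matroid_bases \<B>2 \<and>
     base_polytope \<B> = base_polytope \<B>1 \<union> base_polytope \<B>2 \<and>
     (base_polytope \<B>1 \<inter> base_polytope \<B>2) face_of base_polytope \<B>1 \<and>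
     (base_polytope \<B>1 \<inter> base_polytope \<B>2) face_of base_polytope \<B>2"

definition nontrivial_hyperplane_split :: "'n::finite set set \<Rightarrow> 'n set set \<Rightarrow> 'n set set \<Rightarrow> bool" where
  "nontrivial_hyperplane_split \<B> \<B>1 \<B>2 \<longleftrightarrow> hyperplane_split \<B> \<B>1 \<B>2 \<and>
     base_polytope \<B>1 \<noteq> base_polytope \<B> \<and> base_polytope \<B>2 \<noteq> base_polytope \<B>"

end

theory Submission
  imports Defs
begin

(* In fact only the covering P(M) = P(M1) \<union> P(M2) is needed. The vertices of P(M) are the
   indicator vectors of its bases, and a 0/1 vector lies in the convex hull of 0/1 vectors only
   when it is one of them. So the covering forces B1, B2 \<subseteq> B \<subseteq> B1 \<union> B2. For a nontrivial
   covering take Y \<in> B1 - B2 and, among the bases in B2 - B1, one X closest to Y.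
   - If X and Y differ by a single exchange, the midpoint of their indicator vectors lies in
     P(M1) or P(M2). The midpoint is 1 on X \<inter> Y, so a base used in a convex combination for
     it with positive weight on X - Y (resp. Y - X) contains X (resp. Y), hence equals it;
     so X \<in> B1 or Y \<in> B2, a contradiction.
   - Otherwise every exchange X - x + y (x \<in> X - Y, y \<in> Y - X) is a base of M1, by minimality.
     Basis exchange inside M1 then shows that such a y works for one x iff it works for all
     x, and that at least two distinct y work. For a binary matroid this is impossible: the sum
     over GF(2) of the two fundamental circuits of these y in X is a dependency supported on Y. *)

section \<open>Indicator vectors and vertices of 0/1 polytopes\<close>

definition ind :: "'n::finite set \<Rightarrow> real ^ 'n" where
  "ind S = (\<chi> i. if i \<in> S then 1 else 0)"

lemma ind_nth [simp]: "ind S $ i = (if i \<in> S then 1 else 0)"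
  by (simp add: ind_def)

lemma base_polytope_ind: "base_polytope \<B> = convex hull (ind ` \<B>)"
  unfolding base_polytope_def ind_def by simp

lemma weighted_sum_zero_support:
  fixes u f :: "'a \<Rightarrow> real"
  assumes "finite S" "\<forall>x\<in>S. 0 \<le> u x" "\<forall>x\<in>S. 0 \<le> f x"
    and "(\<Sum>x\<in>S. u x * f x) = 0" "v \<in> S" "0 < u v"
  shows "f v = 0"
  using assms sum_nonneg_eq_0_iff[OF assms(1), of "\<lambda>x. u x * f x"] by auto

lemma hull_vertex_support:
  fixes \<C> :: "'n::finite set set"
  assumes p: "p \<in> convex hull (ind ` \<C>)"
  obtains T where "T \<in> \<C>" "\<forall>i. p$i = 0 \<longrightarrow> i \<notin> T" "\<forall>i. p$i = 1 \<longrightarrow> i \<in> T"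
    "0 < p$j \<longrightarrow> j \<in> T"
proof -
  let ?S = "ind ` \<C>"
  have fin: "finite ?S" by simp
  obtain u where u0: "\<forall>x\<in>?S. 0 \<le> u x" and u1: "sum u ?S = 1"
    and us: "(\<Sum>x\<in>?S. u x *\<^sub>R x) = p"
    using p convex_hull_finite[OF fin] by auto
  have coord: "p$i = (\<Sum>x\<in>?S. u x * x$i)" for i
    using us[symmetric] by simp
  have coord01: "x$i = 0 \<or> x$i = 1" if "x \<in> ?S" for x i
    using that by auto
  obtain v where v: "v \<in> ?S" "0 < u v" "0 < p$j \<longrightarrow> v$j = 1"
  proof (cases "0 < p$j")
    case True
    then have "(\<Sum>x\<in>?S. u x * x$j) \<noteq> 0" using coord[of j] by simp
    then obtain v where v: "v \<in> ?S" "u v * v$j \<noteq> 0"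
      by (rule sum.not_neutral_contains_not_neutral)
    moreover from v have "v$j = 1" using coord01[OF v(1), of j] by auto
    moreover have "0 < u v" using bspec[OF u0 v(1)] v(2) by (simp add: order_less_le)
    ultimately show ?thesis using that by blast
  next
    case False
    have "sum u ?S \<noteq> 0" using u1 by simp
    then obtain v where v: "v \<in> ?S" "u v \<noteq> 0"
      by (rule sum.not_neutral_contains_not_neutral)
    then have "0 < u v" using bspec[OF u0 v(1)] by (simp add: order_less_le)
    then show ?thesis using that v(1) False by blast
  qed
  obtain T where T: "T \<in> \<C>" "v = ind T" using v(1) by blast
  have zeros: "i \<notin> T" if "p$i = 0" for i
  proof -
    have "v$i = 0"
      by (rule weighted_sum_zero_support[OF fin u0 _ _ v(1,2), of "\<lambda>x. x$i"])
        (use coord[of i] that coord01 in fastforce)+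
    then show ?thesis using T(2) by (simp split: if_splits)
  qed
  have ones: "i \<in> T" if "p$i = 1" for i
  proof -
    have complement: "(\<Sum>x\<in>?S. u x * (1 - x$i)) = sum u ?S - (\<Sum>x\<in>?S. u x * x$i)"
      by (simp add: algebra_simps sum_subtractf)
    have "1 - v$i = 0"
      by (rule weighted_sum_zero_support[OF fin u0 _ _ v(1,2), of "\<lambda>x. 1 - x$i"])
        (use complement coord[of i] that u1 coord01 in fastforce)+
    then show ?thesis using T(2) by (simp split: if_splits)
  qed
  show ?thesis
    by (rule that[OF T(1)]) (use zeros ones v(3) T(2) in \<open>auto split: if_splits\<close>)
qed

lemma ind_in_hull_iff: "ind S \<in> convex hull (ind ` \<C>) \<longleftrightarrow> S \<in> \<C>"
proof
  assume "ind S \<in> convex hull (ind ` \<C>)"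
  then obtain T where T: "T \<in> \<C>" "\<forall>i. ind S $ i = 0 \<longrightarrow> i \<notin> T" "\<forall>i. ind S $ i = 1 \<longrightarrow> i \<in> T"
    by (rule hull_vertex_support)
  have "T = S"
  proof (rule set_eqI)
    fix i show "i \<in> T \<longleftrightarrow> i \<in> S" using T(2,3) by (cases "i \<in> S") auto
  qed
  then show "S \<in> \<C>" using T(1) by simp
next
  assume "S \<in> \<C>"
  then show "ind S \<in> convex hull (ind ` \<C>)" by (intro hull_inc imageI)
qed

lemma polytope_cover_bases:
  fixes \<B> :: "'n::finite set set"
  assumes "convex hull (ind ` \<B>) = convex hull (ind ` \<B>1) \<union> convex hull (ind ` \<B>2)"
  shows "\<B>1 \<subseteq> \<B>" "\<B>2 \<subseteq> \<B>" "\<B> \<subseteq> \<B>1 \<union> \<B>2"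
proof -
  have "S \<in> \<B> \<longleftrightarrow> S \<in> \<B>1 \<or> S \<in> \<B>2" for S
    using assms ind_in_hull_iff[of S] by (metis Un_iff)
  then show "\<B>1 \<subseteq> \<B>" "\<B>2 \<subseteq> \<B>" "\<B> \<subseteq> \<B>1 \<union> \<B>2" by blast+
qed

section \<open>Matroid basics and adjacent bases\<close>

lemma bases_antichain:
  assumes "matroid_bases \<B>" "X \<in> \<B>" "W \<in> \<B>" "X \<subseteq> W"
  shows "X = W"
proof (rule ccontr)
  assume "X \<noteq> W"
  then obtain w where "w \<in> W - X" using assms(4) by blast
  then obtain y where "y \<in> X - W" using assms(1-3) unfolding matroid_bases_def by blast
  then show False using assms(4) by blast
qed

lemma basis_exchange:
  assumes "matroid_bases \<B>" "B1 \<in> \<B>" "B2 \<in> \<B>" "x \<in> B1 - B2"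
  obtains y where "y \<in> B2 - B1" "insert y (B1 - {x}) \<in> \<B>"
  using assms unfolding matroid_bases_def by blast

lemma bases_single_exchange:
  assumes "matroid_bases \<B>" "X \<in> \<B>" "Y \<in> \<B>" "X - Y = {x}"
  obtains y where "Y - X = {y}"
proof -
  obtain y where y: "y \<in> Y - X" and W: "insert y (X - {x}) \<in> \<B>"
    using basis_exchange[OF assms(1-3), of x] assms(4) by blast
  have "insert y (X - {x}) \<subseteq> Y" using assms(4) y by blast
  then have "Y = insert y (X - {x})" using bases_antichain[OF assms(1) W assms(3)] by simp
  then show ?thesis using that y assms(4) by blast
qed

text \<open>If the midpoint of two bases X, Y with X - Y = {x} lies in the polytope of a subfamily
  of bases, then X belongs to that subfamily: a vertex used for the midpoint with positive
  weight at x contains all of X, since the midpoint is 1 on X \<inter> Y.\<close>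
lemma midpoint_forces_base:
  assumes "matroid_bases \<B>" "\<C> \<subseteq> \<B>" "X \<in> \<B>" "X - Y = {x}"
    and m: "(1/2::real) *\<^sub>R ind X + (1/2::real) *\<^sub>R ind Y \<in> convex hull (ind ` \<C>)"
  shows "X \<in> \<C>"
proof -
  let ?m = "(1/2::real) *\<^sub>R ind X + (1/2::real) *\<^sub>R ind Y"
  obtain T where T: "T \<in> \<C>" "\<forall>i. ?m $ i = 0 \<longrightarrow> i \<notin> T" "\<forall>i. ?m $ i = 1 \<longrightarrow> i \<in> T"
    "0 < ?m $ x \<longrightarrow> x \<in> T"
    by (rule hull_vertex_support[OF m, where j = x])
  have "X \<subseteq> T"
  proof
    fix i assume "i \<in> X"
    show "i \<in> T"
    proof (cases "i \<in> Y")
      case True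
      then have "?m $ i = 1" using \<open>i \<in> X\<close> by simp
      then show ?thesis using T(3) by blast
    next
      case False
      then have "i = x" "0 < ?m $ x" using \<open>i \<in> X\<close> assms(4) by auto
      then show ?thesis using T(4) by blast
    qed
  qed
  then have "X = T" using bases_antichain[OF assms(1,3)] T(1) assms(2) by blast
  then show ?thesis using T(1) by simp
qed

text \<open>Two bases differing by a single exchange cannot be separated by a covering of the polytope:
  the midpoint of their indicator vectors lies in one of the two pieces, and that piece then
  contains both bases.\<close>
lemma adjacent_bases_same_side:
  fixes \<B> :: "'n::finite set set"
  assumes mB: "matroid_bases \<B>" and sub1: "\<B>1 \<subseteq> \<B>" and sub2: "\<B>2 \<subseteq> \<B>"
    and cover: "convex hull (ind ` \<B>) = convex hull (ind ` \<B>1) \<union> convex hull (ind ` \<B>2)"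
    and XB: "X \<in> \<B>" and YB: "Y \<in> \<B>" and adjacent: "X - Y = {x}"
  shows "X \<in> \<B>1 \<or> Y \<in> \<B>2"
proof -
  obtain y where "Y - X = {y}" using bases_single_exchange[OF mB XB YB adjacent] by blast
  let ?m = "(1/2::real) *\<^sub>R ind X + (1/2::real) *\<^sub>R ind Y"
  have "?m \<in> convex hull (ind ` \<B>)"
    by (rule convexD[OF convex_convex_hull]) (use XB YB in \<open>auto simp: hull_inc\<close>)
  then consider "?m \<in> convex hull (ind ` \<B>1)" | "?m \<in> convex hull (ind ` \<B>2)"
    using cover by blast
  then show ?thesis
  proof cases
    case 1
    then show ?thesis using midpoint_forces_base[OF mB sub1 XB adjacent] by blast
  next
    case 2
    then have "(1/2::real) *\<^sub>R ind Y + (1/2::real) *\<^sub>R ind X \<in> convex hull (ind ` \<B>2)"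
      by (simp add: add.commute)
    then show ?thesis using midpoint_forces_base[OF mB sub2 YB \<open>Y - X = {y}\<close>] by blast
  qed
qed

section \<open>Fundamental circuits of a binary matroid\<close>

lemma fundamental_circuit:
  fixes A :: "'n::finite \<Rightarrow> nat \<Rightarrow> bit"
  assumes B: "\<B> = {S. gf2_indep A S \<and> (\<forall>e. gf2_indep A (insert e S) \<longrightarrow> e \<in> S)}"
    and X: "X \<in> \<B>" and y: "y \<notin> X"
  obtains c where "c y = 1" "\<forall>e. e \<notin> insert y X \<longrightarrow> c e = 0"
    "\<forall>i. (\<Sum>e\<in>UNIV. c e * A e i) = 0"
    "\<forall>x\<in>X. gf2_indep A (insert y (X - {x})) \<longrightarrow> c x = 1"
proof -
  have iX: "gf2_indep A X" using X B by auto
  have "\<not> gf2_indep A (insert y X)" using X B y by auto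
  then obtain c0 where dep: "\<forall>i. (\<Sum>e\<in>insert y X. c0 e * A e i) = 0"
    and nz: "\<exists>e\<in>insert y X. c0 e \<noteq> 0"
    unfolding gf2_indep_def by blast
  define c where "c e = (if e \<in> insert y X then c0 e else 0)" for e
  have sum_c: "(\<Sum>e\<in>insert y X - {z}. c e * A e i) = (\<Sum>e\<in>UNIV. c e * A e i)"
    if "c z = 0" for z i
    by (rule sum.mono_neutral_left) (use that in \<open>auto simp: c_def\<close>)
  have dep_c: "(\<Sum>e\<in>UNIV. c e * A e i) = 0" for i
  proof -
    have "(\<Sum>e\<in>UNIV. c e * A e i) = (\<Sum>e\<in>insert y X. c e * A e i)"
      by (rule sum.mono_neutral_right) (auto simp: c_def)
    also have "\<dots> = 0" using dep by (simp add: c_def)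
    finally show ?thesis .
  qed
  text \<open>No element of X + y whose removal leaves an independent set can have coefficient 0:
    the remaining coefficients would form a dependency among independent columns.\<close>
  have no_zero_coeff: False
    if z: "z \<in> insert y X" "c z = 0" and ind: "gf2_indep A (insert y X - {z})" for z
  proof -
    have "\<forall>i. (\<Sum>e\<in>insert y X - {z}. c e * A e i) = 0" using sum_c[OF z(2)] dep_c by simp
    then have "\<forall>e\<in>insert y X. c e = 0" using ind z(2) unfolding gf2_indep_def by blast
    then show False using nz by (force simp: c_def)
  qed
  have cy: "c y = 1"
    using no_zero_coeff[of y] iX y by (cases "c y") auto
  have "\<forall>x\<in>X. gf2_indep A (insert y (X - {x})) \<longrightarrow> c x = 1"
  proof (intro ballI impI)
    fix x assume "x \<in> X" "gf2_indep A (insert y (X - {x}))"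
    moreover have "insert y X - {x} = insert y (X - {x})" using \<open>x \<in> X\<close> y by blast
    ultimately show "c x = 1" using no_zero_coeff[of x] by (cases "c x") auto
  qed
  moreover have "\<forall>e. e \<notin> insert y X \<longrightarrow> c e = 0" by (simp add: c_def)
  ultimately show ?thesis using that cy dep_c by blast
qed

text \<open>In a binary matroid two distinct elements of Y - X cannot both be exchangeable with
  every element of X - Y: the sum of their fundamental circuits would be a nonzero dependency
  inside the base Y.\<close>
lemma binary_no_double_swap:
  fixes A :: "'n::finite \<Rightarrow> nat \<Rightarrow> bit"
  assumes B: "\<B> = {S. gf2_indep A S \<and> (\<forall>e. gf2_indep A (insert e S) \<longrightarrow> e \<in> S)}"
    and X: "X \<in> \<B>" and Y: "Y \<in> \<B>" and y: "y \<in> Y - X" and w: "w \<in> Y - X" and "y \<noteq> w"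
    and swaps: "\<forall>x\<in>X - Y. insert y (X - {x}) \<in> \<B> \<and> insert w (X - {x}) \<in> \<B>"
  shows False
proof -
  obtain c where c1: "c y = 1" and cz: "\<forall>e. e \<notin> insert y X \<longrightarrow> c e = 0"
    and cs: "\<forall>i. (\<Sum>e\<in>UNIV. c e * A e i) = 0"
    and cx: "\<forall>x\<in>X. gf2_indep A (insert y (X - {x})) \<longrightarrow> c x = 1"
    using fundamental_circuit[OF B X] y by blast
  obtain c' where "c' w = 1" and c'z: "\<forall>e. e \<notin> insert w X \<longrightarrow> c' e = 0"
    and c's: "\<forall>i. (\<Sum>e\<in>UNIV. c' e * A e i) = 0"
    and c'x: "\<forall>x\<in>X. gf2_indep A (insert w (X - {x})) \<longrightarrow> c' x = 1"
    using fundamental_circuit[OF B X] w by blast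
  define d where "d e = c e + c' e" for e
  have d_outside: "d e = 0" if "e \<notin> Y" for e
  proof (cases "e \<in> X")
    case True
    then have "c e = 1" "c' e = 1" using that swaps cx c'x B by auto
    then show ?thesis unfolding d_def by simp
  qed (use cz c'z that y w in \<open>auto simp: d_def\<close>)
  have "\<forall>i. (\<Sum>e\<in>Y. d e * A e i) = 0"
  proof
    fix i
    have "(\<Sum>e\<in>Y. d e * A e i) = (\<Sum>e\<in>UNIV. d e * A e i)"
      by (rule sum.mono_neutral_left) (use d_outside in auto)
    also have "\<dots> = (\<Sum>e\<in>UNIV. c e * A e i) + (\<Sum>e\<in>UNIV. c' e * A e i)"
      unfolding d_def by (simp only: distrib_right sum.distrib)
    finally show "(\<Sum>e\<in>Y. d e * A e i) = 0" using cs c's by simp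
  qed
  then have "d y = 0" using Y B y unfolding gf2_indep_def by blast
  moreover have "c' y = 0" using c'z y \<open>y \<noteq> w\<close> by auto
  ultimately show False using c1 unfolding d_def by simp
qed

section \<open>Exchanges between two bases\<close>

lemma swap_independent_of_removed:
  assumes mB: "matroid_bases \<B>" and mB1: "matroid_bases \<B>1" and sub: "\<B>1 \<subseteq> \<B>"
    and X: "X \<in> \<B>" "X \<notin> \<B>1" and Y: "Y \<in> \<B>"
    and swaps_in: "\<And>x y. x \<in> X - Y \<Longrightarrow> y \<in> Y - X \<Longrightarrow> insert y (X - {x}) \<in> \<B> \<Longrightarrow>
        insert y (X - {x}) \<in> \<B>1"
    and x: "x \<in> X - Y" and x': "x' \<in> X - Y" and y': "y' \<in> Y - X"
    and b': "insert y' (X - {x'}) \<in> \<B>"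
  shows "insert y' (X - {x}) \<in> \<B>"
proof (rule ccontr)
  assume nb: "insert y' (X - {x}) \<notin> \<B>"
  then have "x \<noteq> x'" using b' by blast
  obtain y where y: "y \<in> Y - X" and b: "insert y (X - {x}) \<in> \<B>"
    using basis_exchange[OF mB X(1) Y x] by blast
  have "y \<noteq> y'" using b nb by blast
  text \<open>Exchange in M1 between the two neighbours X - x + y and X - x' + y'.\<close>
  have "y \<in> insert y (X - {x}) - insert y' (X - {x'})" using y \<open>y \<noteq> y'\<close> by blast
  from basis_exchange[OF mB1 swaps_in[OF x y b] swaps_in[OF x' y' b'] this]
  obtain f where f: "f \<in> insert y' (X - {x'}) - insert y (X - {x})"
    and fB: "insert f (insert y (X - {x}) - {y}) \<in> \<B>1" by blast
  have rest: "insert y (X - {x}) - {y} = X - {x}" using y by blast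
  have "f = x \<or> f = y'" using f \<open>x \<noteq> x'\<close> by blast
  then show False
  proof
    assume "f = x"
    then show False using fB rest x X(2) by (simp add: insert_absorb)
  next
    assume "f = y'"
    then show False using fB rest nb sub by auto
  qed
qed

lemma two_universal_swaps:
  assumes mB: "matroid_bases \<B>" and X: "X \<in> \<B>" and Y: "Y \<in> \<B>" and two: "2 \<le> card (X - Y)"
    and transfer: "\<And>x x' y. x \<in> X - Y \<Longrightarrow> x' \<in> X - Y \<Longrightarrow> y \<in> Y - X \<Longrightarrow>
        insert y (X - {x'}) \<in> \<B> \<Longrightarrow> insert y (X - {x}) \<in> \<B>"
  obtains y w where "y \<in> Y - X" "w \<in> Y - X" "y \<noteq> w"
    "\<forall>x\<in>X - Y. insert y (X - {x}) \<in> \<B> \<and> insert w (X - {x}) \<in> \<B>"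
proof -
  obtain x0 where x0: "x0 \<in> X - Y" using two by (cases "X - Y = {}") auto
  obtain y where y: "y \<in> Y - X" and b0: "insert y (X - {x0}) \<in> \<B>"
    using basis_exchange[OF mB X Y x0] by blast
  text \<open>Exchanging y out of Y brings in some z; a second element x' \<noteq> z of X - Y, exchanged
    out of X towards Y - y + z, yields an element w \<noteq> y.\<close>
  obtain z where z: "z \<in> X - Y" and W: "insert z (Y - {y}) \<in> \<B>"
    using basis_exchange[OF mB Y X y] by blast
  obtain x' where x': "x' \<in> X - Y" "x' \<noteq> z"
  proof -
    have "\<not> X - Y \<subseteq> {z}" using two card_mono[of "{z}" "X - Y"] by auto
    then show ?thesis using that by blast
  qed
  then have "x' \<in> X - insert z (Y - {y})" by blast
  from basis_exchange[OF mB X W this]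
  obtain w where w: "w \<in> insert z (Y - {y}) - X" and bw: "insert w (X - {x'}) \<in> \<B>" by blast
  have w': "w \<in> Y - X" "y \<noteq> w" using w z by auto
  show ?thesis
    by (rule that[OF y w']) (use transfer x0 y b0 x'(1) w'(1) bw in blast)
qed

definition swap_distance :: "'n set \<Rightarrow> 'n set \<Rightarrow> nat" where
  "swap_distance X Y = card (X - Y) + card (Y - X)"

text \<open>An exchange X - x + y towards Y is strictly closer to Y; so if X is a closest base of
  M2 outside M1, such an exchange that is a base of M must lie in M1.\<close>
lemma closest_swaps_in:
  fixes X Y :: "'n::finite set"
  assumes cov: "\<B> \<subseteq> \<B>1 \<union> \<B>2"
    and closest: "\<And>X'. X' \<in> \<B>2 \<Longrightarrow> X' \<notin> \<B>1 \<Longrightarrow> swap_distance X Y \<le> swap_distance X' Y"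
    and x: "x \<in> X - Y" and y: "y \<in> Y - X" and b: "insert y (X - {x}) \<in> \<B>"
  shows "insert y (X - {x}) \<in> \<B>1"
proof (rule ccontr)
  assume "insert y (X - {x}) \<notin> \<B>1"
  then have "swap_distance X Y \<le> swap_distance (insert y (X - {x})) Y"
    using closest cov b by blast
  moreover have "insert y (X - {x}) - Y = (X - Y) - {x}" "Y - insert y (X - {x}) = (Y - X) - {y}"
    using x y by blast+
  moreover have "card (X - Y) \<ge> 1" "card (Y - X) \<ge> 1"
    using x y by (auto simp: Suc_le_eq card_gt_0_iff)
  ultimately show False using x y by (simp add: swap_distance_def)
qed

lemma binary_polytope_cover_trivial:
  fixes \<B> :: "'n::finite set set"
  assumes mB: "matroid_bases \<B>" and bin: "binary_matroid \<B>"
    and mB1: "matroid_bases \<B>1" and mB2: "matroid_bases \<B>2"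
    and cover: "convex hull (ind ` \<B>) = convex hull (ind ` \<B>1) \<union> convex hull (ind ` \<B>2)"
  shows "\<B>1 = \<B> \<or> \<B>2 = \<B>"
proof (rule ccontr)
  assume nontriv: "\<not> (\<B>1 = \<B> \<or> \<B>2 = \<B>)"
  note sub1 = polytope_cover_bases(1)[OF cover] and sub2 = polytope_cover_bases(2)[OF cover]
    and cov = polytope_cover_bases(3)[OF cover]
  obtain Y where Y: "Y \<in> \<B>1" "Y \<notin> \<B>2" using nontriv sub2 cov by blast
  obtain X0 where "X0 \<in> \<B>2" "X0 \<notin> \<B>1" using nontriv sub1 cov by blast
  then obtain X where X: "X \<in> \<B>2" "X \<notin> \<B>1"
    and closest: "\<And>X'. X' \<in> \<B>2 \<Longrightarrow> X' \<notin> \<B>1 \<Longrightarrow> swap_distance X Y \<le> swap_distance X' Y"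
    using ex_has_least_nat[of "\<lambda>X. X \<in> \<B>2 \<and> X \<notin> \<B>1" X0 "\<lambda>X. swap_distance X Y"] by blast
  have XB: "X \<in> \<B>" and YB: "Y \<in> \<B>" using X Y sub1 sub2 by auto
  have "X - Y \<noteq> {}" using bases_antichain[OF mB XB YB] X Y by blast
  then consider (adjacent) x where "X - Y = {x}" | (far) "2 \<le> card (X - Y)"
  proof (cases "card (X - Y) = 1")
    case True
    then show ?thesis using that(1) card_1_singletonE by blast
  next
    case False
    moreover have "0 < card (X - Y)" using \<open>X - Y \<noteq> {}\<close> by (simp add: card_gt_0_iff)
    ultimately have "2 \<le> card (X - Y)" by linarith
    then show ?thesis using that(2) by blast
  qed
  then show False
  proof cases
    case adjacent
    then show False using adjacent_bases_same_side[OF mB sub1 sub2 cover XB YB] X(2) Y(2) by blast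
  next
    case far
    obtain A where A: "\<B> = {S. gf2_indep A S \<and> (\<forall>e. gf2_indep A (insert e S) \<longrightarrow> e \<in> S)}"
      using bin unfolding binary_matroid_def by blast
    note transfer = swap_independent_of_removed[OF mB mB1 sub1 XB X(2) YB
        closest_swaps_in[OF cov closest]]
    obtain y w where "y \<in> Y - X" "w \<in> Y - X" "y \<noteq> w"
      "\<forall>x\<in>X - Y. insert y (X - {x}) \<in> \<B> \<and> insert w (X - {x}) \<in> \<B>"
      by (rule two_universal_swaps[OF mB XB YB far transfer])
    then show False by (rule binary_no_double_swap[OF A XB YB])
  qed
qed

theorem theorem3:
  fixes \<B> :: "'n::finite set set"
  assumes "matroid_bases \<B>" and "binary_matroid \<B>"
  shows "\<not> (\<exists>\<B>1 \<B>2. nontrivial_hyperplane_split \<B> \<B>1 \<B>2)"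
proof
  assume "\<exists>\<B>1 \<B>2. nontrivial_hyperplane_split \<B> \<B>1 \<B>2"
  then obtain \<B>1 \<B>2 where "matroid_bases \<B>1" "matroid_bases \<B>2"
    and "convex hull (ind ` \<B>) = convex hull (ind ` \<B>1) \<union> convex hull (ind ` \<B>2)"
    and "base_polytope \<B>1 \<noteq> base_polytope \<B>" "base_polytope \<B>2 \<noteq> base_polytope \<B>"
    unfolding nontrivial_hyperplane_split_def hyperplane_split_def base_polytope_ind by blast
  then show False using binary_polytope_cover_trivial[OF assms] by blast
qed

end
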